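(* Let $\mathcal{X}\subset\mathbb{R}^n$ be closed and convex, let $\Xi\subset\mathbb{R}^m$ be closed and convex, let $\beta\in(0,1)$, let $\varphi:\mathcal{X}\times\mathcal{X}\times\Xi\to\mathbb{R}$ be bounded and continuous, and let $\mathcal{Y}:\mathcal{X}\times\Xi\rightrightarrows\mathcal{X}$ be a nonempty-valued, compact-valued, continuous set-valued mapping. Let $\xi_1,\ldots,\xi_N\in\Xi$ and $\mu_N=\frac1N\sum_{i=1}^N\xi_i$. Suppose that $\mathcal{Y}(x,\xi)$ does not depend on $\xi$ and that $\xi\mapsto\varphi(x,y,\xi)$ is concave for every $x,y\in\mathcal{X}$. Then the MPC Bellman operator $B_{\mathrm{M}}$ is concavity preserving.
   Context: $C_b(\mathcal{X}\times\Xi)$ denotes the Banach space of bounded continuous real-valued functions on $\mathcal{X}\times\Xi$ with the sup norm. The MPC Bellman operator $B_{\mathrm{M}}:C_b(\mathcal{X}\times\Xi)\to C_b(\mathcal{X}\times\Xi)$ is $B_{\mathrm{M}}(f)(x,\xi)=\inf_{y\in\mathcal{Y}(x,\xi)}\{\varphi(x,y,\xi)+\beta f(y,\mu_N)\}$. $B_{\mathrm{M}}$ is called concavity preserving (resp. convexity preserving) if there exists a closed subset $\mathcal{F}\subset C_b(\mathcal{X}\times\Xi)$ such that $\xi\mapsto f(x,\xi)$ is concave (resp. convex) for every $x\in\mathcal{X}$ and $f\in\mathcal{F}$, and $B_{\mathrm{M}}(\mathcal{F})\subset\mathcal{F}$. *)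

theory Defs
  imports "HOL-Analysis.Analysis"
begin

text \<open>Elements of C_b(X x Xi): bounded continuous real functions on X x Xi,
  represented as curried HOL functions normalised to 0 outside X x Xi.\<close>
definition Cb :: "'a::topological_space set \<Rightarrow> 'b::topological_space set \<Rightarrow> ('a \<Rightarrow> 'b \<Rightarrow> real) set" where
  "Cb X Xi = {f. continuous_on (X \<times> Xi) (\<lambda>(x, xi). f x xi)
                 \<and> bounded ((\<lambda>(x, xi). f x xi) ` (X \<times> Xi))
                 \<and> (\<forall>x xi. (x, xi) \<notin> X \<times> Xi \<longrightarrow> f x xi = 0)}"

definition closed_Cb :: "'a::topological_space set \<Rightarrow> 'b::topological_space set \<Rightarrow> ('a \<Rightarrow> 'b \<Rightarrow> real) set \<Rightarrow> bool" where
  "closed_Cb X Xi F \<longleftrightarrow> F \<subseteq> Cb X Xi \<and>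
     (\<forall>g f. (\<forall>k. g k \<in> F) \<and> f \<in> Cb X Xi \<and>
        (\<forall>e>0. \<forall>\<^sub>F k in sequentially. \<forall>x\<in>X. \<forall>xi\<in>Xi. \<bar>g k x xi - f x xi\<bar> < e)
        \<longrightarrow> f \<in> F)"

definition BM :: "'a set \<Rightarrow> 'b set \<Rightarrow> ('a \<Rightarrow> 'b \<Rightarrow> 'a set) \<Rightarrow> ('a \<Rightarrow> 'a \<Rightarrow> 'b \<Rightarrow> real)
                  \<Rightarrow> real \<Rightarrow> 'b \<Rightarrow> ('a \<Rightarrow> 'b \<Rightarrow> real) \<Rightarrow> ('a \<Rightarrow> 'b \<Rightarrow> real)" where
  "BM X Xi Y phi beta mu f = (\<lambda>x xi. if x \<in> X \<and> xi \<in> Xi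
       then Inf ((\<lambda>y. phi x y xi + beta * f y mu) ` Y x xi) else 0)"

definition concavity_preserving :: "'a::topological_space set \<Rightarrow> 'b::real_normed_vector set \<Rightarrow> ('a \<Rightarrow> 'b \<Rightarrow> 'a set)
     \<Rightarrow> ('a \<Rightarrow> 'a \<Rightarrow> 'b \<Rightarrow> real) \<Rightarrow> real \<Rightarrow> 'b \<Rightarrow> bool" where
  "concavity_preserving X Xi Y phi beta mu \<longleftrightarrow>
     (\<exists>F. F \<noteq> {} \<and> closed_Cb X Xi F \<and> (\<forall>f\<in>F. \<forall>x\<in>X. concave_on Xi (f x))
          \<and> BM X Xi Y phi beta mu ` F \<subseteq> F)"

definition uhc_on :: "'p::topological_space set \<Rightarrow> ('p \<Rightarrow> 'q::topological_space set) \<Rightarrow> bool" where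
  "uhc_on D Y \<longleftrightarrow> (\<forall>p\<in>D. \<forall>U. open U \<and> Y p \<subseteq> U \<longrightarrow>
       (\<exists>V. open V \<and> p \<in> V \<and> (\<forall>q\<in>V \<inter> D. Y q \<subseteq> U)))"

definition lhc_on :: "'p::topological_space set \<Rightarrow> ('p \<Rightarrow> 'q::topological_space set) \<Rightarrow> bool" where
  "lhc_on D Y \<longleftrightarrow> (\<forall>p\<in>D. \<forall>U. open U \<and> Y p \<inter> U \<noteq> {} \<longrightarrow>
       (\<exists>V. open V \<and> p \<in> V \<and> (\<forall>q\<in>V \<inter> D. Y q \<inter> U \<noteq> {})))"

end

theory Submission
  imports Defs
begin

(* Take for F the bounded continuous functions that are concave in xi. F is closed, because
   concavity passes to pointwise (a fortiori uniform) limits. B_M maps F into C_b by Berge's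
   maximum theorem: the value function of a continuous objective minimised over a continuous,
   compact-valued correspondence is continuous. Finally, since the feasible set Y(x, xi) does
   not depend on xi, B_M f (x, .) is the infimum over one fixed index set of the functions
   xi |-> phi(x, y, xi) + beta f(y, mu_N), each concave, and hence is concave itself. *)

lemma tube_lemma_point_compact:
  assumes "open W" "compact K" "{p} \<times> K \<subseteq> W"
  obtains A U where "open A" "open U" "p \<in> A" "K \<subseteq> U" "A \<times> U \<subseteq> W"
proof -
  have "\<forall>y\<in>K. \<exists>A C. open A \<and> open C \<and> p \<in> A \<and> y \<in> C \<and> A \<times> C \<subseteq> W"
  proof
    fix y assume "y \<in> K"
    with assms(3) have "(p, y) \<in> W" by blast
    then obtain A C where "open A" "open C" "(p, y) \<in> A \<times> C" "A \<times> C \<subseteq> W"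
      by (rule open_prod_elim[OF assms(1)])
    then show "\<exists>A C. open A \<and> open C \<and> p \<in> A \<and> y \<in> C \<and> A \<times> C \<subseteq> W" by auto
  qed
  then obtain A C where AC: "\<forall>y\<in>K. open (A y) \<and> open (C y) \<and> p \<in> A y \<and> y \<in> C y \<and> A y \<times> C y \<subseteq> W"
    unfolding bchoice_iff by (elim exE) auto
  obtain T where T: "T \<subseteq> K" "finite T" "K \<subseteq> (\<Union>y\<in>T. C y)"
  proof (rule compactE_image[OF assms(2)])
    show "open (C y)" if "y \<in> K" for y using AC that by blast
    show "K \<subseteq> (\<Union>y\<in>K. C y)" using AC by blast
  qed (use that in blast)
  show thesis
  proof (rule that)
    show "open (\<Inter>y\<in>T. A y)" using AC T(1,2) by (intro open_INT) auto
    show "open (\<Union>y\<in>T. C y)" using AC T(1) by (intro open_UN) auto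
    show "p \<in> (\<Inter>y\<in>T. A y)" using AC T(1) by auto
    show "K \<subseteq> (\<Union>y\<in>T. C y)" by (rule T(3))
    show "(\<Inter>y\<in>T. A y) \<times> (\<Union>y\<in>T. C y) \<subseteq> W"
    proof
      fix z assume "z \<in> (\<Inter>y\<in>T. A y) \<times> (\<Union>y\<in>T. C y)"
      then obtain q w y where "z = (q, w)" "y \<in> T" "q \<in> A y" "w \<in> C y" by blast
      then show "z \<in> W" using AC T(1) by blast
    qed
  qed
qed

lemma continuous_on_compact_tube:
  assumes cont: "continuous_on (D \<times> Z) (\<lambda>(p, y). h p y)"
    and "p \<in> D" "compact K" "K \<subseteq> Z" "open B" "\<forall>y\<in>K. h p y \<in> B"
  obtains A U where "open A" "open U" "p \<in> A" "K \<subseteq> U" "\<forall>q\<in>A \<inter> D. \<forall>z\<in>U \<inter> Z. h q z \<in> B"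
proof -
  obtain W where W: "open W" "W \<inter> (D \<times> Z) = (\<lambda>(p, y). h p y) -` B \<inter> (D \<times> Z)"
    using cont \<open>open B\<close> unfolding continuous_on_open_invariant by blast
  have "{p} \<times> K \<subseteq> W"
  proof
    fix z assume "z \<in> {p} \<times> K"
    then obtain y where "z = (p, y)" "y \<in> K" by blast
    then have "z \<in> W \<inter> (D \<times> Z)" unfolding W(2) using assms(2,4,6) by auto
    then show "z \<in> W" by blast
  qed
  then obtain A U where AU: "open A" "open U" "p \<in> A" "K \<subseteq> U" "A \<times> U \<subseteq> W"
    by (rule tube_lemma_point_compact[OF W(1) \<open>compact K\<close>])
  have "h q z \<in> B" if "q \<in> A \<inter> D" "z \<in> U \<inter> Z" for q z
  proof -
    have "(q, z) \<in> W \<inter> (D \<times> Z)" using that AU(5) by blast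
    then show ?thesis unfolding W(2) by simp
  qed
  with AU(1-4) show thesis by (intro that) auto
qed

lemma eventually_Inf_image_less:
  fixes h :: "'p::topological_space \<Rightarrow> 'y::topological_space \<Rightarrow> real"
  assumes cont: "continuous_on (D \<times> Z) (\<lambda>(p, y). h p y)"
    and Y: "\<forall>q\<in>D. Y q \<subseteq> Z \<and> bdd_below (h q ` Y q)"
    and lhc: "lhc_on D Y" and p: "p \<in> D" "Y p \<noteq> {}"
    and less: "Inf (h p ` Y p) < a"
  shows "\<forall>\<^sub>F q in at p within D. Inf (h q ` Y q) < a"
proof -
  obtain y where y: "y \<in> Y p" "h p y < a"
    using cInf_lessD[OF _ less] p(2) by blast
  have "{y} \<subseteq> Z" "\<forall>y'\<in>{y}. h p y' \<in> {..<a}" using y Y p(1) by auto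
  then obtain A C where AC: "open A" "open C" "p \<in> A" "{y} \<subseteq> C"
      and below: "\<forall>q\<in>A \<inter> D. \<forall>z\<in>C \<inter> Z. h q z < a"
    by (rule continuous_on_compact_tube[OF cont p(1) compact_sing _ open_lessThan]) simp
  have "Y p \<inter> C \<noteq> {}" using y(1) AC(4) by blast
  then obtain V where V: "open V" "p \<in> V" "\<forall>q\<in>V \<inter> D. Y q \<inter> C \<noteq> {}"
    using lhc[unfolded lhc_on_def, rule_format, OF p(1) conjI[OF AC(2)]] by blast
  have "Inf (h q ` Y q) < a" if "q \<in> A \<inter> V" "q \<in> D" for q
  proof -
    have "Y q \<inter> C \<noteq> {}" using V(3) that by blast
    then obtain z where z: "z \<in> Y q" "z \<in> C" by (metis IntE ex_in_conv)
    then have "Inf (h q ` Y q) \<le> h q z" using Y that(2) by (auto intro: cInf_lower)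
    also have "h q z < a" using below z Y that by blast
    finally show ?thesis .
  qed
  then show ?thesis
    unfolding eventually_at_topological using AC V by (intro exI[of _ "A \<inter> V"]) auto
qed

lemma eventually_less_Inf_image:
  fixes h :: "'p::topological_space \<Rightarrow> 'y::topological_space \<Rightarrow> real"
  assumes cont: "continuous_on (D \<times> Z) (\<lambda>(p, y). h p y)"
    and Y: "\<forall>q\<in>D. Y q \<noteq> {} \<and> Y q \<subseteq> Z"
    and uhc: "uhc_on D Y" and p: "p \<in> D" "compact (Y p)" "bdd_below (h p ` Y p)"
    and less: "a < Inf (h p ` Y p)"
  shows "\<forall>\<^sub>F q in at p within D. a < Inf (h q ` Y q)"
proof -
  obtain b where b: "a < b" "b < Inf (h p ` Y p)" using dense[OF less] by blast
  have "Y p \<subseteq> Z" using Y p(1) by blast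
  moreover have "\<forall>y\<in>Y p. h p y \<in> {b<..}"
  proof
    fix y assume "y \<in> Y p"
    with b(2) cInf_lower[OF imageI p(3)] show "h p y \<in> {b<..}" by fastforce
  qed
  ultimately obtain A U where AU: "open A" "open U" "p \<in> A" "Y p \<subseteq> U"
      and above: "\<forall>q\<in>A \<inter> D. \<forall>z\<in>U \<inter> Z. b < h q z"
    by (rule continuous_on_compact_tube[OF cont p(1,2) _ open_greaterThan]) simp
  obtain V where V: "open V" "p \<in> V" "\<forall>q\<in>V \<inter> D. Y q \<subseteq> U"
    using uhc[unfolded uhc_on_def, rule_format, OF p(1) conjI[OF AU(2,4)]] by blast
  have "a < Inf (h q ` Y q)" if q: "q \<in> A \<inter> V" "q \<in> D" for q
  proof -
    have above_b: "b < h q z" if "z \<in> Y q" for z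
      using above V(3) Y q that by blast
    have "Y q \<noteq> {}" using Y q(2) by blast
    then have "b \<le> Inf (h q ` Y q)" by (rule cINF_greatest) (use above_b in \<open>simp add: less_imp_le\<close>)
    with b(1) show ?thesis by linarith
  qed
  then show ?thesis
    unfolding eventually_at_topological using AU V by (intro exI[of _ "A \<inter> V"]) auto
qed

(* Berge's maximum theorem, in the form for minima. *)
lemma continuous_on_Inf_image:
  fixes h :: "'p::topological_space \<Rightarrow> 'y::topological_space \<Rightarrow> real"
  assumes cont: "continuous_on (D \<times> Z) (\<lambda>(p, y). h p y)"
    and Y: "\<forall>p\<in>D. Y p \<noteq> {} \<and> compact (Y p) \<and> Y p \<subseteq> Z"
    and uhc: "uhc_on D Y" and lhc: "lhc_on D Y"
  shows "continuous_on D (\<lambda>p. Inf (h p ` Y p))"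
proof -
  have bdd: "bdd_below (h p ` Y p)" if p: "p \<in> D" for p
  proof -
    have "continuous_on (Y p) (\<lambda>y. (\<lambda>(p, y). h p y) (p, y))"
      using Y p by (intro continuous_on_compose2[OF cont]) (auto intro!: continuous_intros)
    then have "compact (h p ` Y p)" using Y p by (simp add: compact_continuous_image)
    then show ?thesis by (intro bounded_imp_bdd_below compact_imp_bounded)
  qed
  show ?thesis
    unfolding continuous_on_def
  proof
    fix p assume p: "p \<in> D"
    show "((\<lambda>p. Inf (h p ` Y p)) \<longlongrightarrow> Inf (h p ` Y p)) (at p within D)"
    proof (rule order_tendstoI)
      fix a assume "a < Inf (h p ` Y p)"
      with Y p bdd show "\<forall>\<^sub>F q in at p within D. a < Inf (h q ` Y q)"
        by (intro eventually_less_Inf_image[OF cont _ uhc]) auto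
    next
      fix a assume "Inf (h p ` Y p) < a"
      with Y p bdd show "\<forall>\<^sub>F q in at p within D. Inf (h q ` Y q) < a"
        by (intro eventually_Inf_image_less[OF cont _ lhc]) auto
    qed
  qed
qed

lemma concave_on_cong:
  assumes "\<And>x. x \<in> S \<Longrightarrow> f x = g x"
  shows "concave_on S f \<longleftrightarrow> concave_on S g"
proof -
  have "concave_on S g" if "concave_on S f" "\<And>x. x \<in> S \<Longrightarrow> f x = g x" for f g
  proof -
    have S: "convex S" using concave_on_imp_convex[OF that(1)] .
    show ?thesis unfolding concave_on_iff
    proof (intro conjI S ballI allI impI)
      fix x y and u v :: real
      assume xy: "x \<in> S" "y \<in> S" and uv: "0 \<le> u" "0 \<le> v" "u + v = 1"
      have "u *\<^sub>R x + v *\<^sub>R y \<in> S" using convexD[OF S xy uv] .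
      with that xy uv show "u * g x + v * g y \<le> g (u *\<^sub>R x + v *\<^sub>R y)"
        unfolding concave_on_iff by (metis (no_types))
    qed
  qed
  with assms show ?thesis by metis
qed

lemma concave_on_INF:
  fixes g :: "'i \<Rightarrow> 'a::real_vector \<Rightarrow> real"
  assumes "A \<noteq> {}" and conc: "\<forall>i\<in>A. concave_on S (g i)"
    and bdd: "\<forall>x\<in>S. bdd_below ((\<lambda>i. g i x) ` A)"
  shows "concave_on S (\<lambda>x. INF i\<in>A. g i x)"
proof -
  have S: "convex S" using assms(1) conc concave_on_imp_convex by blast
  show ?thesis unfolding concave_on_iff
  proof (intro conjI S ballI allI impI)
    fix x y and u v :: real
    assume xy: "x \<in> S" "y \<in> S" and uv: "0 \<le> u" "0 \<le> v" "u + v = 1"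
    show "u * (INF i\<in>A. g i x) + v * (INF i\<in>A. g i y)
          \<le> (INF i\<in>A. g i (u *\<^sub>R x + v *\<^sub>R y))"
    proof (rule cINF_greatest[OF assms(1)])
      fix i assume i: "i \<in> A"
      have "u * (INF i\<in>A. g i x) \<le> u * g i x"
        using cINF_lower[OF bdd[rule_format, OF xy(1)] i] uv(1) by (rule mult_left_mono)
      moreover have "v * (INF i\<in>A. g i y) \<le> v * g i y"
        using cINF_lower[OF bdd[rule_format, OF xy(2)] i] uv(2) by (rule mult_left_mono)
      moreover have "u * g i x + v * g i y \<le> g i (u *\<^sub>R x + v *\<^sub>R y)"
        using conc i xy uv unfolding concave_on_iff by blast
      ultimately show "u * (INF i\<in>A. g i x) + v * (INF i\<in>A. g i y) \<le> g i (u *\<^sub>R x + v *\<^sub>R y)"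
        by linarith
    qed
  qed
qed

lemma concave_on_LIMSEQ:
  assumes conc: "\<And>k. concave_on S (g k)" and lim: "\<And>x. x \<in> S \<Longrightarrow> (\<lambda>k. g k x) \<longlonglongrightarrow> f x"
  shows "concave_on S f"
proof -
  have S: "convex S" using concave_on_imp_convex[OF conc] .
  show ?thesis unfolding concave_on_iff
  proof (intro conjI S ballI allI impI)
    fix x y and u v :: real
    assume xy: "x \<in> S" "y \<in> S" and uv: "0 \<le> u" "0 \<le> v" "u + v = 1"
    have "u *\<^sub>R x + v *\<^sub>R y \<in> S" using convexD[OF S xy uv] .
    show "u * f x + v * f y \<le> f (u *\<^sub>R x + v *\<^sub>R y)"
    proof (rule LIMSEQ_le)
      show "(\<lambda>k. u * g k x + v * g k y) \<longlonglongrightarrow> u * f x + v * f y"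
        using xy by (intro tendsto_intros lim)
      show "(\<lambda>k. g k (u *\<^sub>R x + v *\<^sub>R y)) \<longlonglongrightarrow> f (u *\<^sub>R x + v *\<^sub>R y)"
        using \<open>u *\<^sub>R x + v *\<^sub>R y \<in> S\<close> by (rule lim)
      show "\<exists>N. \<forall>k\<ge>N. u * g k x + v * g k y \<le> g k (u *\<^sub>R x + v *\<^sub>R y)"
        using conc xy uv unfolding concave_on_iff by blast
    qed
  qed
qed

lemma Cb_abs_bounded:
  assumes "f \<in> Cb X Xi"
  obtains K where "\<And>x xi. x \<in> X \<Longrightarrow> xi \<in> Xi \<Longrightarrow> \<bar>f x xi\<bar> \<le> K"
proof -
  obtain K where "\<forall>x\<in>X. \<forall>xi\<in>Xi. \<bar>f x xi\<bar> \<le> K"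
    using assms unfolding Cb_def bounded_iff by auto
  then show thesis by (intro that) auto
qed

lemma BM_objective_bounded:
  assumes phi_bdd: "bounded ((\<lambda>(x, y, xi). phi x y xi) ` (X \<times> X \<times> Xi))"
    and f: "f \<in> Cb X Xi" and mu: "mu \<in> Xi"
  obtains K where "\<And>x y xi. x \<in> X \<Longrightarrow> y \<in> X \<Longrightarrow> xi \<in> Xi \<Longrightarrow> \<bar>phi x y xi + beta * f y mu\<bar> \<le> K"
proof -
  obtain Kp where Kp: "\<forall>x\<in>X. \<forall>y\<in>X. \<forall>xi\<in>Xi. \<bar>phi x y xi\<bar> \<le> Kp"
    using phi_bdd by (auto simp: bounded_iff)
  obtain Kf where Kf: "\<And>y xi. y \<in> X \<Longrightarrow> xi \<in> Xi \<Longrightarrow> \<bar>f y xi\<bar> \<le> Kf"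
    using Cb_abs_bounded[OF f] by blast
  show thesis
  proof (rule that)
    fix x y xi assume xyxi: "x \<in> X" "y \<in> X" "xi \<in> Xi"
    have "\<bar>phi x y xi + beta * f y mu\<bar> \<le> \<bar>phi x y xi\<bar> + \<bar>beta\<bar> * \<bar>f y mu\<bar>"
      by (metis abs_mult abs_triangle_ineq)
    also have "\<dots> \<le> Kp + \<bar>beta\<bar> * Kf"
      using Kp Kf[OF xyxi(2) mu] xyxi by (intro add_mono mult_left_mono) auto
    finally show "\<bar>phi x y xi + beta * f y mu\<bar> \<le> Kp + \<bar>beta\<bar> * Kf" .
  qed
qed

lemma BM_in_Cb:
  fixes X :: "'a::topological_space set" and Xi :: "'b::topological_space set"
  assumes phi_bdd: "bounded ((\<lambda>(x, y, xi). phi x y xi) ` (X \<times> X \<times> Xi))"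
    and phi_cont: "continuous_on (X \<times> X \<times> Xi) (\<lambda>(x, y, xi). phi x y xi)"
    and Y: "\<forall>x\<in>X. \<forall>xi\<in>Xi. Y x xi \<noteq> {} \<and> compact (Y x xi) \<and> Y x xi \<subseteq> X"
    and uhc: "uhc_on (X \<times> Xi) (\<lambda>(x, xi). Y x xi)" and lhc: "lhc_on (X \<times> Xi) (\<lambda>(x, xi). Y x xi)"
    and f: "f \<in> Cb X Xi" and mu: "mu \<in> Xi"
  shows "BM X Xi Y phi beta mu f \<in> Cb X Xi"
proof -
  define h where "h = (\<lambda>(x, xi) y. phi x y xi + beta * f y mu)"
  have "continuous_on ((X \<times> Xi) \<times> X)
      (\<lambda>z. (\<lambda>(x, y, xi). phi x y xi) (fst (fst z), snd z, snd (fst z)) + beta * (\<lambda>(x, xi). f x xi) (snd z, mu))"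
  proof (intro continuous_intros)
    show "continuous_on ((X \<times> Xi) \<times> X) (\<lambda>z. (\<lambda>(x, y, xi). phi x y xi) (fst (fst z), snd z, snd (fst z)))"
      by (rule continuous_on_compose2[OF phi_cont]) (auto intro!: continuous_intros)
    have "continuous_on (X \<times> Xi) (\<lambda>(x, xi). f x xi)" using f unfolding Cb_def by blast
    then show "continuous_on ((X \<times> Xi) \<times> X) (\<lambda>z. (\<lambda>(x, xi). f x xi) (snd z, mu))"
      by (rule continuous_on_compose2) (use mu in \<open>auto intro!: continuous_intros\<close>)
  qed
  then have "continuous_on ((X \<times> Xi) \<times> X) (\<lambda>(p, y). h p y)"
    by (rule continuous_on_eq) (auto simp: h_def)
  then have "continuous_on (X \<times> Xi) (\<lambda>p. Inf (h p ` (\<lambda>(x, xi). Y x xi) p))"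
    by (rule continuous_on_Inf_image[OF _ _ uhc lhc]) (use Y in auto)
  then have cont: "continuous_on (X \<times> Xi) (\<lambda>(x, xi). BM X Xi Y phi beta mu f x xi)"
    by (rule continuous_on_eq) (auto simp: BM_def h_def)
  obtain K where K: "\<And>x y xi. x \<in> X \<Longrightarrow> y \<in> X \<Longrightarrow> xi \<in> Xi \<Longrightarrow> \<bar>phi x y xi + beta * f y mu\<bar> \<le> K"
    using BM_objective_bounded[OF phi_bdd f mu] by blast
  have "\<bar>BM X Xi Y phi beta mu f x xi\<bar> \<le> K" if x: "x \<in> X" "xi \<in> Xi" for x xi
  proof -
    have "Y x xi \<noteq> {}" "Y x xi \<subseteq> X" using Y x by auto
    then show ?thesis unfolding BM_def using x by (auto intro!: cInf_abs_ge K)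
  qed
  then have "bounded ((\<lambda>(x, xi). BM X Xi Y phi beta mu f x xi) ` (X \<times> Xi))"
    unfolding bounded_iff by auto
  with cont show ?thesis unfolding Cb_def by (auto simp: BM_def)
qed

lemma concave_on_BM:
  fixes Xi :: "'b::real_normed_vector set"
  assumes phi_bdd: "bounded ((\<lambda>(x, y, xi). phi x y xi) ` (X \<times> X \<times> Xi))"
    and Y: "\<forall>x\<in>X. \<forall>xi\<in>Xi. Y x xi \<noteq> {} \<and> Y x xi \<subseteq> X"
    and Y_const: "\<forall>x\<in>X. \<forall>xi\<in>Xi. \<forall>xi'\<in>Xi. Y x xi = Y x xi'"
    and conc: "\<forall>x\<in>X. \<forall>y\<in>X. concave_on Xi (phi x y)"
    and f: "f \<in> Cb X Xi" and mu: "mu \<in> Xi" and x: "x \<in> X"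
  shows "concave_on Xi (BM X Xi Y phi beta mu f x)"
proof -
  obtain K where K: "\<And>x y xi. x \<in> X \<Longrightarrow> y \<in> X \<Longrightarrow> xi \<in> Xi \<Longrightarrow> \<bar>phi x y xi + beta * f y mu\<bar> \<le> K"
    using BM_objective_bounded[OF phi_bdd f mu] by blast
  have "concave_on Xi (\<lambda>xi. INF y\<in>Y x mu. phi x y xi + beta * f y mu)"
  proof (rule concave_on_INF)
    show "Y x mu \<noteq> {}" using Y x mu by blast
    show "\<forall>y\<in>Y x mu. concave_on Xi (\<lambda>xi. phi x y xi + beta * f y mu)"
    proof
      fix y assume "y \<in> Y x mu"
      then have "concave_on Xi (phi x y)" using conc Y x mu by blast
      then show "concave_on Xi (\<lambda>xi. phi x y xi + beta * f y mu)"
        by (intro concave_on_add concave_on_const[THEN iffD2] concave_on_imp_convex)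
    qed
    show "\<forall>xi\<in>Xi. bdd_below ((\<lambda>y. phi x y xi + beta * f y mu) ` Y x mu)"
    proof
      fix xi assume "xi \<in> Xi"
      have "- K \<le> phi x y xi + beta * f y mu" if "y \<in> Y x mu" for y
      proof -
        have "y \<in> X" using Y x mu that by blast
        from abs_le_D2[OF K[OF x this \<open>xi \<in> Xi\<close>]] show ?thesis by linarith
      qed
      then show "bdd_below ((\<lambda>y. phi x y xi + beta * f y mu) ` Y x mu)"
        by (rule bdd_belowI2)
    qed
  qed
  moreover have "(INF y\<in>Y x mu. phi x y xi + beta * f y mu) = BM X Xi Y phi beta mu f x xi"
    if "xi \<in> Xi" for xi
  proof -
    have "Y x xi = Y x mu" using Y_const x mu that by blast
    with x that show ?thesis by (simp add: BM_def)
  qed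
  ultimately show ?thesis by (rule concave_on_cong[THEN iffD1, rotated])
qed

lemma closed_Cb_concave: "closed_Cb X Xi {f \<in> Cb X Xi. \<forall>x\<in>X. concave_on Xi (f x)}"
  unfolding closed_Cb_def
proof (intro conjI allI impI)
  fix g f
  assume gf: "(\<forall>k. g k \<in> {f \<in> Cb X Xi. \<forall>x\<in>X. concave_on Xi (f x)}) \<and> f \<in> Cb X Xi \<and>
      (\<forall>e>0. \<forall>\<^sub>F k in sequentially. \<forall>x\<in>X. \<forall>xi\<in>Xi. \<bar>g k x xi - f x xi\<bar> < e)"
  have "concave_on Xi (f x)" if x: "x \<in> X" for x
  proof (rule concave_on_LIMSEQ)
    show "concave_on Xi (g k x)" for k using gf x by blast
    show "(\<lambda>k. g k x xi) \<longlonglongrightarrow> f x xi" if xi: "xi \<in> Xi" for xi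
      unfolding tendsto_iff dist_real_def
      using gf x xi by (fast elim: eventually_mono)
  qed
  with gf show "f \<in> {f \<in> Cb X Xi. \<forall>x\<in>X. concave_on Xi (f x)}" by blast
qed blast

lemma mean_in_convex:
  assumes "convex S" "N \<ge> 1" "\<forall>i\<in>{1..N}. xs i \<in> S"
  shows "(1 / real N) *\<^sub>R (\<Sum>i=1..N. xs i) \<in> S"
proof -
  have "(1 / real N) *\<^sub>R (\<Sum>i=1..N. xs i) = (\<Sum>i\<in>{1..N}. (1 / real N) *\<^sub>R xs i)"
    by (simp add: scaleR_sum_right)
  also have "\<dots> \<in> S" by (rule convex_sum) (use assms in auto)
  finally show ?thesis .
qed

theorem proposition1:
  fixes X :: "(real^'n) set" and Xi :: "(real^'m) set"
    and beta :: real
    and phi :: "real^'n \<Rightarrow> real^'n \<Rightarrow> real^'m \<Rightarrow> real"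
    and Y :: "real^'n \<Rightarrow> real^'m \<Rightarrow> (real^'n) set"
    and N :: nat and xis :: "nat \<Rightarrow> real^'m"
  assumes "closed X" "convex X" "closed Xi" "convex Xi"
    and "0 < beta" "beta < 1"
    and "bounded ((\<lambda>(x, y, xi). phi x y xi) ` (X \<times> X \<times> Xi))"
    and "continuous_on (X \<times> X \<times> Xi) (\<lambda>(x, y, xi). phi x y xi)"
    and "\<forall>x\<in>X. \<forall>xi\<in>Xi. Y x xi \<noteq> {} \<and> compact (Y x xi) \<and> Y x xi \<subseteq> X"
    and "uhc_on (X \<times> Xi) (\<lambda>(x, xi). Y x xi)"
    and "lhc_on (X \<times> Xi) (\<lambda>(x, xi). Y x xi)"
    and "N \<ge> 1" "\<forall>i\<in>{1..N}. xis i \<in> Xi"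
    and "\<forall>x\<in>X. \<forall>xi\<in>Xi. \<forall>xi'\<in>Xi. Y x xi = Y x xi'"
    and "\<forall>x\<in>X. \<forall>y\<in>X. concave_on Xi (phi x y)"
  shows "concavity_preserving X Xi Y phi beta ((1 / real N) *\<^sub>R (\<Sum>i=1..N. xis i))"
proof -
  define F where "F = {f \<in> Cb X Xi. \<forall>x\<in>X. concave_on Xi (f x)}"
  define mu where "mu = (1 / real N) *\<^sub>R (\<Sum>i=1..N. xis i)"
  have mu: "mu \<in> Xi" unfolding mu_def by (rule mean_in_convex) (use assms(4,12,13) in auto)
  have Y: "\<forall>x\<in>X. \<forall>xi\<in>Xi. Y x xi \<noteq> {} \<and> Y x xi \<subseteq> X" using assms(9) by blast
  have "(\<lambda>x xi. 0) \<in> F"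
    unfolding F_def using assms(4) by (auto simp: Cb_def bounded_iff concave_on_const intro: exI[of _ 0])
  moreover have "closed_Cb X Xi F" unfolding F_def by (rule closed_Cb_concave)
  moreover have "BM X Xi Y phi beta mu f \<in> F" if "f \<in> F" for f
    using that BM_in_Cb[OF assms(7-11) _ mu] concave_on_BM[OF assms(7) Y assms(14,15) _ mu]
    unfolding F_def by blast
  ultimately show ?thesis
    unfolding concavity_preserving_def mu_def[symmetric] F_def by blast
qed

end
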